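(* In the setting described in the context (BFL with Byzantine agents, under hypotheses (i) and (ii)), for every non-faulty agent $i\in\{1,\dots,n-\phi\}$ and every $\theta\neq\theta^*$, $$\frac{1}{t^2}\sum_{r=1}^{t}\Big(\sum_{j=1}^{n-\phi}\Phi_{ij}(t,r+1)\sum_{k=1}^{r}\mathcal{L}^j_k(\theta,\theta^* )-r\sum_{j=1}^{n-\phi}\pi_j(r+1)H_j(\theta,\theta^* )\Big)\longrightarrow 0\quad\text{almost surely as }t\to\infty.$$
   Context: Setting: $n$ agents on a directed graph $G=(\mathcal{V},\mathcal{E})$, $\mathcal{V}=\{1,\dots,n\}$, $\mathcal{I}_i$ the incoming neighbors of $i$; synchronous iterations $t=1,2,\dots$; an unknown set $\mathcal{F}$ of $\phi\le f$ Byzantine agents behaving arbitrarily (arbitrary, inconsistent messages, full knowledge, collusion); the non-faulty agents are indexed $1,\dots,n-\phi$; missing messages are replaced by a default value. Finite hypothesis set $\Theta=\{\theta_1,\dots,\theta_m\}$ with true state $\theta^*$. Agent $i$ has finite signal space $\mathcal{S}_i$ and likelihoods $\ell_i(\cdot\mid\theta)$ with full support; in iteration $t$ it observes $s_t^i\sim\ell_i(\cdot\mid\theta^* )$, independent across agents and iterations. $\ell_i(s_{1,t}^i\mid\theta)=\prod_{r=1}^t\ell_i(s_r^i\mid\theta)$. Define $\mathcal{L}^j_k(\theta,\theta^* )=\log\frac{\ell_j(s_k^j\mid\theta)}{\ell_j(s_k^j\mid\theta^* )}$ and $H_j(\theta,\theta^* )=\sum_{w\in\mathcal{S}_j}\ell_j(w\mid\theta^*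 )\log\frac{\ell_j(w\mid\theta)}{\ell_j(w\mid\theta^* )}=-D(\ell_j(\cdot\mid\theta^* )\|\ell_j(\cdot\mid\theta))$. An $m$-dimensional reduced graph of $G$ is obtained by removing all faulty nodes and their incident links and then, for each non-faulty node, removing up to $mf$ additional incoming links; a source component is a strongly connected component with no incoming links from outside it. Hypotheses: (i) every $m$-dimensional reduced graph of $G$ has a unique source component; (ii) for every $\theta\ne\theta^*$ and every $m$-dimensional reduced graph $\mathcal{H}$ with source component $\mathcal{S}_{\mathcal{H}}$, $\sum_{j\in\mathcal{S}_{\mathcal{H}}}D(\ell_j(\cdot\mid\theta^* )\|\ell_j(\cdot\mid\theta))\neq0$. Let $\chi$ be the number of $m$-dimensional reduced graphs of $G$. Algorithm BFL: One-Iter at agent $i$ with input $x^i\in\mathbb{R}^m$ transmits $x^i$, receives the multiset $R^i$ from incoming neighbors, forms $Z^i$ by adding, for every sub-multiset $C\subseteq R^i\cup\{x^i\}$ of size $(m+1)f+1$, a Tverberg point of $C$ (a point in $\bigcap_{k=1}^{f+1}\mathrm{Conv}(Y_k)$ for a partition of $C$ into $f+1$ nonempty parts with nonempty such intersection), and returns $\frac{1}{1+|Z^i|}(x^i+\sum_{z\in Z^i}z)$. BFL initializes $\mu_0^i$ uniform on $\Theta$ and in iteration $t$ sets $\eta_t^i=\text{One-Iter}(\log\mu_{t-1}^i)$, observes $s_t^i$, and sets $\mu_t^i(\theta)\propto\ell_i(s_{1,t}^i\mid\theta)\exp(\eta_t^i(\theta))$ (normalized over $\Theta$). Matrix representation (known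 property of One-Iter under hypothesis (i)): for each $t\ge1$ there is a (random) row-stochastic matrix $\mathbf{A}[t]\in\mathbb{R}^{(n-\phi)\times(n-\phi)}$ with $\eta_t^i(\theta)=\sum_{j=1}^{n-\phi}\mathbf{A}_{ij}[t]\log\mu_{t-1}^j(\theta)$ for all non-faulty $i$ and all $\theta$, and $\mathbf{A}[t]\ge\beta\mathbf{H}[t]$ entrywise for the adjacency matrix $\mathbf{H}[t]$ of some $m$-dimensional reduced graph, where $0<\beta\le1$ depends only on $G$. Let $\Phi(t,r)=\mathbf{A}[t]\mathbf{A}[t-1]\cdots\mathbf{A}[r]$ for $1\le r\le t$ and $\Phi(t,t+1)=\mathbf{I}$. Then $\lim_{t\to\infty}\Phi(t,r)=\mathbf{1}\pi(r)$ for a stochastic row vector $\pi(r)\in\mathbb{R}^{n-\phi}$, and $|\Phi_{ij}(t,r)-\pi_j(r)|\le(1-\beta^{\nu})^{\lceil (t-r+1)/\nu\rceil}$ for all $t\ge r\ge1$, where $\nu=\chi(n-\phi)$. $\Phi_{ij}$ and $\pi_j$ refer to these objects. *)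

theory Defs
  imports "HOL-Probability.Probability"
begin

text \<open>Agents are the non-faulty ones, indexed 1..N (N = n - phi).
  Square matrices over the non-faulty agents are functions nat => nat => real,
  only the entries with indices in {1..N} being relevant.\<close>

definition ident_mat :: "nat \<Rightarrow> nat \<Rightarrow> real" where
  "ident_mat i j = (if i = j then 1 else 0)"

definition mat_mult :: "nat \<Rightarrow> (nat \<Rightarrow> nat \<Rightarrow> real) \<Rightarrow> (nat \<Rightarrow> nat \<Rightarrow> real)
    \<Rightarrow> nat \<Rightarrow> nat \<Rightarrow> real" where
  "mat_mult N X Y i j = (\<Sum>k\<in>{1..N}. X i k * Y k j)"

primrec Phi :: "nat \<Rightarrow> (nat \<Rightarrow> nat \<Rightarrow> nat \<Rightarrow> real) \<Rightarrow> nat \<Rightarrow> nat \<Rightarrow> nat \<Rightarrow> nat \<Rightarrow> real" where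
  "Phi N A 0 r = ident_mat"
| "Phi N A (Suc t) r =
     (if r \<le> Suc t then mat_mult N (A (Suc t)) (Phi N A t r) else ident_mat)"

definition LLR :: "(nat \<Rightarrow> 's \<Rightarrow> 'h \<Rightarrow> real) \<Rightarrow> (nat \<Rightarrow> nat \<Rightarrow> 'a \<Rightarrow> 's)
    \<Rightarrow> nat \<Rightarrow> nat \<Rightarrow> 'h \<Rightarrow> 'h \<Rightarrow> 'a \<Rightarrow> real" where
  "LLR lik s j k \<theta> \<theta>s \<omega> = ln (lik j (s j k \<omega>) \<theta> / lik j (s j k \<omega>) \<theta>s)"

definition Hdiv :: "(nat \<Rightarrow> 's set) \<Rightarrow> (nat \<Rightarrow> 's \<Rightarrow> 'h \<Rightarrow> real) \<Rightarrow> nat \<Rightarrow> 'h \<Rightarrow> 'h \<Rightarrow> real" where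
  "Hdiv S lik j \<theta> \<theta>s = (\<Sum>w\<in>S j. lik j w \<theta>s * ln (lik j w \<theta> / lik j w \<theta>s))"

end

theory Submission
  imports Defs
begin

text \<open>With \<open>S\<^sub>j(r) = \<Sum>k\<le>r. L\<^sup>j\<^sub>k\<close>, the r-th summand splits as
  \<open>\<Sum>\<^sub>j (\<Phi>\<^sub>i\<^sub>j(t,r+1) - \<pi>\<^sub>j(r+1)) S\<^sub>j(r)\<close> plus \<open>\<Sum>\<^sub>j \<pi>\<^sub>j(r+1) (S\<^sub>j(r) - r H\<^sub>j)\<close>.
  The log-likelihood ratios are bounded, so \<open>S\<^sub>j(r) = O(r)\<close> and, by the geometric convergence of the
  backward products, the first part is \<open>O(t \<rho>^(t-r))\<close>; summed over \<open>r \<le> t\<close> it is \<open>O(t)\<close>.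
  For each agent the ratios are independent, bounded and have mean \<open>H\<^sub>j\<close>, so Hoeffding's inequality
  and Borel-Cantelli give the strong law \<open>S\<^sub>j(r) - r H\<^sub>j = o(r)\<close> almost surely; summed over
  \<open>r \<le> t\<close> the second part is \<open>o(t\<^sup>2)\<close>.\<close>

lemma cesaro_square_tendsto_0:
  fixes E :: "nat \<Rightarrow> real"
  assumes nonneg: "\<And>r. E r \<ge> 0"
    and little_o: "\<And>\<epsilon>. \<epsilon> > 0 \<Longrightarrow> eventually (\<lambda>r. E r \<le> \<epsilon> * real r) sequentially"
  shows "(\<lambda>t. (1 / (real t)\<^sup>2) * (\<Sum>r=1..t. E r)) \<longlonglongrightarrow> 0"
proof (rule tendstoI)
  fix \<epsilon> :: real assume "\<epsilon> > 0"
  then obtain R where R: "\<And>r. r \<ge> R \<Longrightarrow> E r \<le> \<epsilon>/2 * real r"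
    using little_o[of "\<epsilon>/2"] by (auto simp: eventually_sequentially)
  define B where "B = (\<Sum>r<R. E r)"
  have E_le: "E r \<le> B + \<epsilon>/2 * real t" if "r \<in> {1..t}" for r t
  proof (cases "r < R")
    case True
    then have "E r \<le> B" unfolding B_def using nonneg by (intro member_le_sum) auto
    then show ?thesis using \<open>\<epsilon> > 0\<close> by (simp add: add_increasing2)
  next
    case False
    then have "E r \<le> \<epsilon>/2 * real r" using R by simp
    also have "\<dots> \<le> \<epsilon>/2 * real t" using that \<open>\<epsilon> > 0\<close> by (intro mult_left_mono) auto
    finally show ?thesis using nonneg unfolding B_def by (simp add: add_increasing sum_nonneg)
  qed
  have "eventually (\<lambda>t. B / real t < \<epsilon>/2) sequentially"
    using \<open>\<epsilon> > 0\<close> by (intro order_tendstoD(2)[OF lim_const_over_n]) auto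
  then show "eventually (\<lambda>t. dist ((1 / (real t)\<^sup>2) * (\<Sum>r=1..t. E r)) 0 < \<epsilon>) sequentially"
    using eventually_gt_at_top[of 0]
  proof eventually_elim
    case (elim t)
    have "(\<Sum>r=1..t. E r) \<le> (\<Sum>r=1..t. B + \<epsilon>/2 * real t)" by (intro sum_mono E_le)
    then have "(1 / (real t)\<^sup>2) * (\<Sum>r=1..t. E r) \<le> B / real t + \<epsilon>/2"
      using elim by (simp add: field_simps power2_eq_square)
    moreover have "(1 / (real t)\<^sup>2) * (\<Sum>r=1..t. E r) \<ge> 0" by (simp add: nonneg sum_nonneg)
    ultimately show ?case using elim(1) by (simp only: dist_real_def diff_zero abs_of_nonneg)
  qed
qed

lemma square_normalized_tendsto_0:
  fixes u E :: "nat \<Rightarrow> real"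
  assumes nonneg: "\<And>r. E r \<ge> 0"
    and little_o: "\<And>\<epsilon>. \<epsilon> > 0 \<Longrightarrow> eventually (\<lambda>r. E r \<le> \<epsilon> * real r) sequentially"
    and bound: "\<And>t. t \<ge> 1 \<Longrightarrow> \<bar>u t\<bar> \<le> K * real t + (\<Sum>r=1..t. E r)"
  shows "(\<lambda>t. (1 / (real t)\<^sup>2) * u t) \<longlonglongrightarrow> 0"
proof (rule Lim_null_comparison)
  show "eventually (\<lambda>t. norm ((1 / (real t)\<^sup>2) * u t) \<le> K / real t + (1 / (real t)\<^sup>2) * (\<Sum>r=1..t. E r))
      sequentially"
    using eventually_ge_at_top[of 1]
  proof eventually_elim
    case (elim t)
    have "(1 / (real t)\<^sup>2) * \<bar>u t\<bar> \<le> (1 / (real t)\<^sup>2) * (K * real t + (\<Sum>r=1..t. E r))"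
      using bound[OF elim] by (intro mult_left_mono) auto
    with elim show ?case by (simp add: abs_mult field_simps power2_eq_square)
  qed
  show "(\<lambda>t. K / real t + (1 / (real t)\<^sup>2) * (\<Sum>r=1..t. E r)) \<longlonglongrightarrow> 0"
    using tendsto_add[OF lim_const_over_n cesaro_square_tendsto_0[OF nonneg little_o]] by simp
qed

lemma eventually_sum_le_mult:
  fixes f :: "'i \<Rightarrow> nat \<Rightarrow> real"
  assumes "finite J" "\<epsilon> > 0"
    and "\<And>j \<epsilon>. j \<in> J \<Longrightarrow> \<epsilon> > 0 \<Longrightarrow> eventually (\<lambda>r. f j r \<le> \<epsilon> * real r) sequentially"
  shows "eventually (\<lambda>r. (\<Sum>j\<in>J. f j r) \<le> \<epsilon> * real r) sequentially"
proof -
  have "eventually (\<lambda>r. \<forall>j\<in>J. f j r \<le> \<epsilon> / (card J + 1) * real r) sequentially"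
    using assms by (intro eventually_ball_finite ballI assms(3)) auto
  then show ?thesis
  proof eventually_elim
    case (elim r)
    then have "(\<Sum>j\<in>J. f j r) \<le> card J * (\<epsilon> / (card J + 1) * real r)"
      using sum_mono[of J "\<lambda>j. f j r"] by fastforce
    also have "\<dots> \<le> \<epsilon> * real r"
      using \<open>\<epsilon> > 0\<close> by (simp add: field_simps mult_right_mono)
    finally show ?case .
  qed
qed

lemma sum_geometric_weights_le:
  fixes \<rho> :: real
  assumes "0 \<le> \<rho>" "\<rho> < 1" "t \<ge> 1"
  shows "(\<Sum>r=1..t. if r < t then \<rho> ^ (t - r) else 1) \<le> 1 / (1 - \<rho>) + 1"
proof -
  have "(\<Sum>r=1..t. if r < t then \<rho> ^ (t - r) else 1) = 1 + (\<Sum>r\<in>{1..<t}. \<rho> ^ (t - r))"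
    using \<open>t \<ge> 1\<close> by (simp add: atLeastLessThanSuc_atLeastAtMost[symmetric] sum.atLeastLessThan_Suc)
  also have "(\<Sum>r\<in>{1..<t}. \<rho> ^ (t - r)) = (\<Sum>i\<in>{1..<t}. \<rho> ^ i)"
    by (subst sum.atLeastLessThan_rev) (intro sum.cong, auto)
  also have "\<dots> \<le> (\<Sum>i<t. \<rho> ^ i)" using assms by (intro sum_mono2) auto
  also have "\<dots> = (1 - \<rho> ^ t) / (1 - \<rho>)" using assms by (simp add: sum_gp_strict)
  also have "\<dots> \<le> 1 / (1 - \<rho>)" using assms by (intro divide_right_mono) auto
  finally show ?thesis by simp
qed

lemma power_ceiling_div_le_root_power:
  fixes q :: real
  assumes "0 \<le> q" "q \<le> 1" "\<nu> \<ge> 1"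
  shows "q ^ nat \<lceil>real m / real \<nu>\<rceil> \<le> root \<nu> q ^ m"
proof -
  define c where "c = nat \<lceil>real m / real \<nu>\<rceil>"
  have "real m / real \<nu> \<le> real c"
    unfolding c_def by linarith
  then have "real m \<le> real \<nu> * real c"
    using assms(3) by (simp add: field_simps)
  then have "m \<le> \<nu> * c" by (simp flip: of_nat_mult)
  have "q ^ c = root \<nu> q ^ (\<nu> * c)"
    using assms by (simp add: power_mult real_root_pow_pos2)
  also have "\<dots> \<le> root \<nu> q ^ m"
    using \<open>m \<le> \<nu> * c\<close> assms by (intro power_decreasing) auto
  finally show ?thesis unfolding c_def .
qed

lemma sum_mult_deviation_le:
  fixes x p a b :: "'i \<Rightarrow> real"
  assumes x_close: "\<And>j. j \<in> J \<Longrightarrow> \<bar>x j - p j\<bar> \<le> \<delta>"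
    and a_bound: "\<And>j. j \<in> J \<Longrightarrow> \<bar>a j\<bar> \<le> c"
    and p_bound: "\<And>j. j \<in> J \<Longrightarrow> \<bar>p j\<bar> \<le> 1"
  shows "\<bar>(\<Sum>j\<in>J. x j * a j) - (\<Sum>j\<in>J. p j * b j)\<bar> \<le> real (card J) * \<delta> * c + (\<Sum>j\<in>J. \<bar>a j - b j\<bar>)"
proof -
  have "(\<Sum>j\<in>J. x j * a j) - (\<Sum>j\<in>J. p j * b j)
      = (\<Sum>j\<in>J. (x j - p j) * a j) + (\<Sum>j\<in>J. p j * (a j - b j))"
    by (simp add: algebra_simps sum.distrib sum_subtractf)
  also have "\<bar>\<dots>\<bar> \<le> (\<Sum>j\<in>J. \<bar>(x j - p j) * a j\<bar>) + (\<Sum>j\<in>J. \<bar>p j * (a j - b j)\<bar>)"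
    by (intro abs_triangle_ineq[THEN order_trans] add_mono sum_abs)
  also have "\<dots> \<le> (\<Sum>j\<in>J. \<delta> * c) + (\<Sum>j\<in>J. \<bar>a j - b j\<bar>)"
  proof (intro add_mono sum_mono)
    fix j assume j: "j \<in> J"
    show "\<bar>(x j - p j) * a j\<bar> \<le> \<delta> * c"
      unfolding abs_mult using x_close[OF j] a_bound[OF j] by (intro mult_mono) auto
    show "\<bar>p j * (a j - b j)\<bar> \<le> \<bar>a j - b j\<bar>"
      unfolding abs_mult using p_bound[OF j] by (simp add: mult_left_le_one_le)
  qed
  finally show ?thesis by simp
qed

lemma consensus_deviation_tendsto_0:
  fixes Ph :: "nat \<Rightarrow> nat \<Rightarrow> nat \<Rightarrow> real" and p :: "nat \<Rightarrow> nat \<Rightarrow> real"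
    and L :: "nat \<Rightarrow> nat \<Rightarrow> real" and H :: "nat \<Rightarrow> real" and C \<rho> :: real
  assumes C: "C \<ge> 0" "\<And>j k. j \<in> {1..N} \<Longrightarrow> k \<ge> 1 \<Longrightarrow> \<bar>L j k\<bar> \<le> C"
    and \<rho>: "0 \<le> \<rho>" "\<rho> < 1"
    and rate: "\<And>t r j. 1 \<le> r \<Longrightarrow> r < t \<Longrightarrow> j \<in> {1..N} \<Longrightarrow> \<bar>Ph t (r+1) j - p (r+1) j\<bar> \<le> \<rho> ^ (t - r)"
    and last: "\<And>t j. j \<in> {1..N} \<Longrightarrow> \<bar>Ph t (t+1) j - p (t+1) j\<bar> \<le> 1"
    and p_bound: "\<And>r j. j \<in> {1..N} \<Longrightarrow> r \<ge> 1 \<Longrightarrow> \<bar>p r j\<bar> \<le> 1"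
    and average: "\<And>j \<epsilon>. j \<in> {1..N} \<Longrightarrow> \<epsilon> > 0 \<Longrightarrow>
        eventually (\<lambda>r. \<bar>(\<Sum>k=1..r. L j k) - real r * H j\<bar> \<le> \<epsilon> * real r) sequentially"
  shows "(\<lambda>t. (1 / (real t)\<^sup>2) * (\<Sum>r=1..t. (\<Sum>j=1..N. Ph t (r+1) j * (\<Sum>k=1..r. L j k))
            - real r * (\<Sum>j=1..N. p (r+1) j * H j))) \<longlonglongrightarrow> 0"
proof -
  define dev where "dev t r = (\<Sum>j=1..N. Ph t (r+1) j * (\<Sum>k=1..r. L j k))
    - real r * (\<Sum>j=1..N. p (r+1) j * H j)" for t r
  define E where "E r = (\<Sum>j=1..N. \<bar>(\<Sum>k=1..r. L j k) - real r * H j\<bar>)" for r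
  define g where "g t r = (if r < t then \<rho> ^ (t - r) else 1)" for t r :: nat
  have dev_le: "\<bar>dev t r\<bar> \<le> real N * C * real t * g t r + E r" if "1 \<le> r" "r \<le> t" for t r
  proof -
    have sum_bound: "\<bar>\<Sum>k=1..r. L j k\<bar> \<le> C * real t" if "j \<in> {1..N}" for j
    proof -
      have "\<bar>\<Sum>k=1..r. L j k\<bar> \<le> (\<Sum>k=1..r. C)" using that by (intro sum_abs[THEN order_trans] sum_mono C) auto
      also have "\<dots> \<le> C * real t" using \<open>r \<le> t\<close> C by (simp add: mult.commute mult_left_mono)
      finally show ?thesis .
    qed
    have close: "\<bar>Ph t (r+1) j - p (r+1) j\<bar> \<le> g t r" if "j \<in> {1..N}" for j
      using that \<open>1 \<le> r\<close> \<open>r \<le> t\<close> rate last unfolding g_def by (cases "r < t") auto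
    have "(\<Sum>j=1..N. p (r+1) j * (real r * H j)) = real r * (\<Sum>j=1..N. p (r+1) j * H j)"
      by (simp add: sum_distrib_left mult.left_commute)
    then show ?thesis
      using sum_mult_deviation_le[where J = "{1..N}" and x = "\<lambda>j. Ph t (r+1) j" and p = "\<lambda>j. p (r+1) j"
          and a = "\<lambda>j. \<Sum>k=1..r. L j k" and b = "\<lambda>j. real r * H j", OF close sum_bound p_bound]
      unfolding dev_def E_def by (simp add: mult_ac)
  qed
  have E_nonneg: "E r \<ge> 0" for r
    unfolding E_def by (simp add: sum_nonneg)
  have E_little_o: "eventually (\<lambda>r. E r \<le> \<epsilon> * real r) sequentially" if "\<epsilon> > 0" for \<epsilon>
    unfolding E_def using that average by (intro eventually_sum_le_mult) auto
  have sum_dev_le: "\<bar>\<Sum>r=1..t. dev t r\<bar> \<le> real N * C * (1 / (1 - \<rho>) + 1) * real t + (\<Sum>r=1..t. E r)"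
    if "t \<ge> 1" for t
  proof -
    have "\<bar>\<Sum>r=1..t. dev t r\<bar> \<le> (\<Sum>r=1..t. real N * C * real t * g t r + E r)"
      using dev_le by (intro sum_abs[THEN order_trans] sum_mono) auto
    also have "\<dots> = real N * C * real t * (\<Sum>r=1..t. g t r) + (\<Sum>r=1..t. E r)"
      by (simp add: sum.distrib sum_distrib_left)
    also have "\<dots> \<le> real N * C * real t * (1 / (1 - \<rho>) + 1) + (\<Sum>r=1..t. E r)"
      using sum_geometric_weights_le[OF \<rho> that] C unfolding g_def by (intro add_right_mono mult_left_mono) auto
    finally show ?thesis by (simp add: mult_ac)
  qed
  show ?thesis
    using square_normalized_tendsto_0[OF E_nonneg E_little_o sum_dev_le] unfolding dev_def .
qed

lemma (in prob_space) indep_sets_reindex: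
  assumes indep: "indep_sets F (f ` I)" and inj: "inj_on f I"
  shows "indep_sets (\<lambda>i. F (f i)) I"
  unfolding indep_sets_def
proof (intro conjI ballI allI impI)
  fix i assume "i \<in> I" then show "F (f i) \<subseteq> events" using indep by (auto simp: indep_sets_def)
next
  fix J A assume J: "J \<subseteq> I" "J \<noteq> {}" "finite J" and A: "A \<in> Pi J (\<lambda>i. F (f i))"
  define B where "B y = A (the_inv_into J f y)" for y
  have inj_J: "inj_on f J" using inj J(1) by (rule inj_on_subset)
  have B_f: "B (f j) = A j" if "j \<in> J" for j unfolding B_def using the_inv_into_f_f[OF inj_J that] by simp
  have "B \<in> Pi (f ` J) F" using A B_f by auto
  then have "prob (\<Inter>y\<in>f ` J. B y) = (\<Prod>y\<in>f ` J. prob (B y))"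
    using indep J unfolding indep_sets_def by (meson finite_imageI image_is_empty image_mono)
  moreover have "(\<Inter>y\<in>f ` J. B y) = (\<Inter>j\<in>J. A j)" using B_f by auto
  moreover have "(\<Prod>y\<in>f ` J. prob (B y)) = (\<Prod>j\<in>J. prob (A j))"
    using prod.reindex[OF inj_J, of "\<lambda>y. prob (B y)"] B_f by simp
  ultimately show "prob (\<Inter>j\<in>J. A j) = (\<Prod>j\<in>J. prob (A j))" by simp
qed

lemma (in prob_space) indep_vars_reindex:
  assumes "indep_vars M' X (f ` I)" "inj_on f I"
  shows "indep_vars (\<lambda>i. M' (f i)) (\<lambda>i. X (f i)) I"
  using assms unfolding indep_vars_def2
  by (auto intro: indep_sets_reindex[where F = "\<lambda>i. {X i -` A \<inter> space M |A. A \<in> sets (M' i)}"])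

lemma (in prob_space) indep_vars_row:
  assumes "indep_vars (\<lambda>_. M') (\<lambda>(j, k). Y j k) (J \<times> K)" "j \<in> J"
  shows "indep_vars (\<lambda>_. M') (Y j) K"
proof -
  have "indep_vars (\<lambda>_. M') (\<lambda>(j, k). Y j k) ((\<lambda>k. (j, k)) ` K)"
    using assms by (elim indep_vars_subset) auto
  from indep_vars_reindex[OF this] show ?thesis by (simp add: inj_on_def)
qed

lemma (in prob_space) expectation_finite_valued:
  fixes Y :: "'a \<Rightarrow> 'b" and f :: "'b \<Rightarrow> real"
  assumes Y: "Y \<in> measurable M (count_space UNIV)"
    and S: "finite S" "\<And>\<omega>. \<omega> \<in> space M \<Longrightarrow> Y \<omega> \<in> S"
  shows "expectation (\<lambda>\<omega>. f (Y \<omega>)) = (\<Sum>w\<in>S. f w * prob {\<omega>\<in>space M. Y \<omega> = w})"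
proof -
  have level_sets: "{\<omega>\<in>space M. Y \<omega> = w} \<in> events" for w
    using measurable_sets[OF Y, of "{w}"] by (simp add: vimage_def Int_def conj_commute)
  have "expectation (\<lambda>\<omega>. f (Y \<omega>))
      = expectation (\<lambda>\<omega>. \<Sum>w\<in>S. f w * indicator {\<omega>\<in>space M. Y \<omega> = w} \<omega>)"
  proof (rule Bochner_Integration.integral_cong[OF refl])
    fix \<omega> assume "\<omega> \<in> space M"
    then have "(\<Sum>w\<in>S. f w * indicator {\<omega>\<in>space M. Y \<omega> = w} \<omega>) = (\<Sum>w\<in>S. if w = Y \<omega> then f w else 0)"
      by (intro sum.cong) (auto simp: indicator_def)
    also have "\<dots> = f (Y \<omega>)" using S \<open>\<omega> \<in> space M\<close> by simp
    finally show "f (Y \<omega>) = (\<Sum>w\<in>S. f w * indicator {\<omega>\<in>space M. Y \<omega> = w} \<omega>)" ..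
  qed
  also have "\<dots> = (\<Sum>w\<in>S. f w * prob {\<omega>\<in>space M. Y \<omega> = w})"
    using level_sets by (subst Bochner_Integration.integral_sum) (auto simp: emeasure_eq_measure)
  finally show ?thesis .
qed

lemma (in prob_space) prob_sum_deviation_le:
  fixes X :: "nat \<Rightarrow> 'a \<Rightarrow> real"
  assumes indep: "indep_vars (\<lambda>_. borel) X {1..r}"
    and bounded: "\<And>k \<omega>. k \<in> {1..r} \<Longrightarrow> \<omega> \<in> space M \<Longrightarrow> \<bar>X k \<omega>\<bar> \<le> D"
    and mean: "\<And>k. k \<in> {1..r} \<Longrightarrow> expectation (X k) = \<mu>"
    and "\<epsilon> > 0" "D > 0"
  shows "prob {\<omega>\<in>space M. \<epsilon> * real r \<le> \<bar>(\<Sum>k=1..r. X k \<omega>) - real r * \<mu>\<bar>}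
    \<le> 2 * exp (- (\<epsilon>\<^sup>2 / (2 * D\<^sup>2))) ^ r"
proof (cases "r = 0")
  case True
  then show ?thesis by (simp add: order_trans[OF prob_le_1])
next
  case False
  interpret Hoeffding_ineq M "{1..r}" X "\<lambda>_. - D" "\<lambda>_. D" "real r * \<mu>"
  proof unfold_locales
    fix k assume "k \<in> {1..r}"
    then show "AE \<omega> in M. X k \<omega> \<in> {- D..D}"
      using bounded by (intro AE_I2) (force simp: abs_le_iff)
  qed (use indep mean in simp_all)
  have "prob {\<omega>\<in>space M. \<epsilon> * real r \<le> \<bar>(\<Sum>k=1..r. X k \<omega>) - real r * \<mu>\<bar>}
      \<le> 2 * exp (- 2 * (\<epsilon> * real r)\<^sup>2 / (\<Sum>k\<in>{1..r}. (D - - D)\<^sup>2))"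
    using Hoeffding_ineq_abs_ge[of "\<epsilon> * real r"] \<open>\<epsilon> > 0\<close> \<open>D > 0\<close> False by simp
  also have "- 2 * (\<epsilon> * real r)\<^sup>2 / (\<Sum>k\<in>{1..r}. (D - - D)\<^sup>2) = real r * (- (\<epsilon>\<^sup>2 / (2 * D\<^sup>2)))"
    using False \<open>D > 0\<close> by (simp add: field_simps power2_eq_square)
  also have "exp \<dots> = exp (- (\<epsilon>\<^sup>2 / (2 * D\<^sup>2))) ^ r" by (rule exp_of_nat_mult)
  finally show ?thesis .
qed

lemma (in prob_space) bounded_indep_sum_eventually_close:
  fixes X :: "nat \<Rightarrow> 'a \<Rightarrow> real"
  assumes indep: "indep_vars (\<lambda>_. borel) X {1..}"
    and bounded: "\<And>k \<omega>. k \<ge> 1 \<Longrightarrow> \<omega> \<in> space M \<Longrightarrow> \<bar>X k \<omega>\<bar> \<le> C"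
    and mean: "\<And>k. k \<ge> 1 \<Longrightarrow> expectation (X k) = \<mu>"
    and "\<epsilon> > 0"
  shows "AE \<omega> in M. eventually (\<lambda>r. \<bar>(\<Sum>k=1..r. X k \<omega>) - real r * \<mu>\<bar> \<le> \<epsilon> * real r) sequentially"
proof -
  define D where "D = \<bar>C\<bar> + 1" \<comment> \<open>Hoeffding needs a nondegenerate range\<close>
  define q where "q = exp (- (\<epsilon>\<^sup>2 / (2 * D\<^sup>2)))"
  define far where "far r = {\<omega>\<in>space M. \<epsilon> * real r \<le> \<bar>(\<Sum>k=1..r. X k \<omega>) - real r * \<mu>\<bar>}" for r
  have "X k \<in> borel_measurable M" if "k \<ge> 1" for k
    using indep that unfolding indep_vars_def by auto
  then have [measurable]: "(\<lambda>\<omega>. \<Sum>k=1..r. X k \<omega>) \<in> borel_measurable M" for r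
    by (intro borel_measurable_sum) auto
  have [measurable]: "far r \<in> events" for r
    unfolding far_def by measurable
  have "D > 0" unfolding D_def by simp
  have bounded_D: "\<bar>X k \<omega>\<bar> \<le> D" if "k \<ge> 1" "\<omega> \<in> space M" for k \<omega>
    using bounded[OF that] unfolding D_def by linarith
  from \<open>D > 0\<close> have "0 < q" "q < 1" unfolding q_def using \<open>\<epsilon> > 0\<close> by simp_all
  have far_le: "prob (far r) \<le> 2 * q ^ r" for r
    unfolding far_def q_def
  proof (rule prob_sum_deviation_le)
    show "indep_vars (\<lambda>_. borel) X {1..r}" using indep by (rule indep_vars_subset) auto
  qed (use \<open>\<epsilon> > 0\<close> \<open>D > 0\<close> bounded_D mean in auto)
  have "summable (\<lambda>r. 2 * q ^ r)"
    using \<open>0 < q\<close> \<open>q < 1\<close> by (intro summable_mult summable_geometric) simp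
  then have "summable (\<lambda>r. prob (far r))"
    by (rule summable_comparison_test') (simp add: far_le)
  then have "AE \<omega> in M. eventually (\<lambda>r. \<omega> \<in> space M - far r) sequentially"
    by (intro borel_cantelli_AE1) (auto simp: emeasure_eq_measure)
  then show ?thesis by (rule AE_mp) (auto intro!: AE_I2 elim: eventually_mono simp: far_def)
qed

lemma (in prob_space) bounded_indep_strong_law:
  fixes X :: "nat \<Rightarrow> 'a \<Rightarrow> real"
  assumes "indep_vars (\<lambda>_. borel) X {1..}"
    and "\<And>k \<omega>. k \<ge> 1 \<Longrightarrow> \<omega> \<in> space M \<Longrightarrow> \<bar>X k \<omega>\<bar> \<le> C"
    and "\<And>k. k \<ge> 1 \<Longrightarrow> expectation (X k) = \<mu>"
  shows "AE \<omega> in M. \<forall>\<epsilon>>0. eventually (\<lambda>r. \<bar>(\<Sum>k=1..r. X k \<omega>) - real r * \<mu>\<bar> \<le> \<epsilon> * real r) sequentially"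
proof -
  have "AE \<omega> in M. \<forall>m. eventually (\<lambda>r. \<bar>(\<Sum>k=1..r. X k \<omega>) - real r * \<mu>\<bar> \<le> inverse (Suc m) * real r) sequentially"
    using assms by (intro AE_all_countable[THEN iffD2] allI bounded_indep_sum_eventually_close) auto
  then show ?thesis
  proof (rule AE_mp[OF _ AE_I2], intro impI allI)
    fix \<omega> and \<epsilon> :: real
    assume close: "\<forall>m. eventually (\<lambda>r. \<bar>(\<Sum>k=1..r. X k \<omega>) - real r * \<mu>\<bar> \<le> inverse (Suc m) * real r) sequentially"
      and "\<epsilon> > 0"
    then obtain m where "inverse (Suc m) < \<epsilon>" using reals_Archimedean by blast
    then have le: "inverse (Suc m) * real r \<le> \<epsilon> * real r" for r by (intro mult_right_mono) auto
    show "eventually (\<lambda>r. \<bar>(\<Sum>k=1..r. X k \<omega>) - real r * \<mu>\<bar> \<le> \<epsilon> * real r) sequentially"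
      using close[rule_format, of m] by (rule eventually_mono) (rule order_trans[OF _ le])
  qed
qed

lemma Phi_Suc_self: "Phi N A t (t + 1) = ident_mat"
  by (cases t) auto

lemma LLR_bounded:
  fixes s :: "nat \<Rightarrow> nat \<Rightarrow> 'a \<Rightarrow> 's"
  assumes "finite J" "\<And>j. j \<in> J \<Longrightarrow> finite (S j)"
    and "\<And>j k \<omega>. j \<in> J \<Longrightarrow> k \<ge> 1 \<Longrightarrow> \<omega> \<in> \<Omega> \<Longrightarrow> s j k \<omega> \<in> S j"
  obtains C where "C \<ge> 0"
    "\<And>j k \<omega>. j \<in> J \<Longrightarrow> k \<ge> 1 \<Longrightarrow> \<omega> \<in> \<Omega> \<Longrightarrow> \<bar>LLR lik s j k \<theta> \<theta>s \<omega>\<bar> \<le> C"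
proof
  define g where "g j w = \<bar>ln (lik j w \<theta> / lik j w \<theta>s)\<bar>" for j w
  show "(\<Sum>j\<in>J. \<Sum>w\<in>S j. g j w) \<ge> 0" by (simp add: g_def sum_nonneg)
  fix j k :: nat and \<omega> assume "j \<in> J" "k \<ge> 1" "\<omega> \<in> \<Omega>"
  then have "g j (s j k \<omega>) \<le> (\<Sum>w\<in>S j. g j w)"
    using assms by (intro member_le_sum) (auto simp: g_def)
  also have "\<dots> \<le> (\<Sum>j\<in>J. \<Sum>w\<in>S j. g j w)"
    using assms \<open>j \<in> J\<close> by (intro member_le_sum) (auto simp: g_def sum_nonneg)
  finally show "\<bar>LLR lik s j k \<theta> \<theta>s \<omega>\<bar> \<le> (\<Sum>j\<in>J. \<Sum>w\<in>S j. g j w)"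
    by (simp add: LLR_def g_def)
qed

lemma (in prob_space) LLR_strong_law:
  fixes s :: "nat \<Rightarrow> nat \<Rightarrow> 'a \<Rightarrow> 's"
  assumes "finite J" and S_fin: "\<And>j. j \<in> J \<Longrightarrow> finite (S j)"
    and s_range: "\<And>j k \<omega>. j \<in> J \<Longrightarrow> k \<ge> 1 \<Longrightarrow> \<omega> \<in> space M \<Longrightarrow> s j k \<omega> \<in> S j"
    and s_indep: "indep_vars (\<lambda>_. count_space UNIV) (\<lambda>(j, k). s j k) (J \<times> {1..})"
    and s_distr: "\<And>j k w. j \<in> J \<Longrightarrow> k \<ge> 1 \<Longrightarrow> w \<in> S j \<Longrightarrow>
      prob {\<omega> \<in> space M. s j k \<omega> = w} = lik j w \<theta>s"
  shows "AE \<omega> in M. \<forall>j\<in>J. \<forall>\<epsilon>>0. eventually (\<lambda>r.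
    \<bar>(\<Sum>k=1..r. LLR lik s j k \<theta> \<theta>s \<omega>) - real r * Hdiv S lik j \<theta> \<theta>s\<bar> \<le> \<epsilon> * real r) sequentially"
proof -
  obtain C where LLR_le:
    "\<And>j k \<omega>. j \<in> J \<Longrightarrow> k \<ge> 1 \<Longrightarrow> \<omega> \<in> space M \<Longrightarrow> \<bar>LLR lik s j k \<theta> \<theta>s \<omega>\<bar> \<le> C"
    by (rule LLR_bounded[where J = J and S = S and s = s and \<Omega> = "space M"]) (use assms in auto)
  have s_meas: "s j k \<in> measurable M (count_space UNIV)" if "j \<in> J" "k \<ge> 1" for j k
    using s_indep that unfolding indep_vars_def by auto
  have LLR_mean: "expectation (LLR lik s j k \<theta> \<theta>s) = Hdiv S lik j \<theta> \<theta>s"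
    if "j \<in> J" "k \<ge> 1" for j k
  proof -
    have "expectation (\<lambda>\<omega>. ln (lik j (s j k \<omega>) \<theta> / lik j (s j k \<omega>) \<theta>s))
        = (\<Sum>w\<in>S j. ln (lik j w \<theta> / lik j w \<theta>s) * prob {\<omega>\<in>space M. s j k \<omega> = w})"
      by (rule expectation_finite_valued) (use s_meas S_fin s_range that in auto)
    also have "\<dots> = Hdiv S lik j \<theta> \<theta>s"
      unfolding Hdiv_def by (intro sum.cong) (simp_all add: s_distr[OF that])
    finally show ?thesis unfolding LLR_def[abs_def] .
  qed
  have LLR_indep: "indep_vars (\<lambda>_. borel) (\<lambda>k. LLR lik s j k \<theta> \<theta>s) {1..}" if "j \<in> J" for j
    using indep_vars_compose2[OF indep_vars_row[OF s_indep that], of "\<lambda>_ w. ln (lik j w \<theta> / lik j w \<theta>s)"]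
    unfolding LLR_def by simp
  show ?thesis
    using LLR_le LLR_mean \<open>finite J\<close> by (intro AE_finite_allI bounded_indep_strong_law LLR_indep) auto
qed

theorem lemma3:
  fixes M :: "'a measure"
    and N :: nat
    and S :: "nat \<Rightarrow> 's set"
    and lik :: "nat \<Rightarrow> 's \<Rightarrow> 'h::finite \<Rightarrow> real"
    and \<theta>s :: 'h
    and s :: "nat \<Rightarrow> nat \<Rightarrow> 'a \<Rightarrow> 's"
    and A :: "nat \<Rightarrow> 'a \<Rightarrow> nat \<Rightarrow> nat \<Rightarrow> real"
    and \<pi> :: "nat \<Rightarrow> 'a \<Rightarrow> nat \<Rightarrow> real"
    and \<beta> :: real and \<nu> :: nat
    and i :: nat and \<theta> :: 'h
  assumes M: "prob_space M"
    and S_fin: "\<And>j. j \<in> {1..N} \<Longrightarrow> finite (S j) \<and> S j \<noteq> {}"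
    and lik_pos: "\<And>j w \<theta>'. j \<in> {1..N} \<Longrightarrow> w \<in> S j \<Longrightarrow> lik j w \<theta>' > 0"
    and lik_sum: "\<And>j \<theta>'. j \<in> {1..N} \<Longrightarrow> (\<Sum>w\<in>S j. lik j w \<theta>') = 1"
    and s_range: "\<And>j k \<omega>. j \<in> {1..N} \<Longrightarrow> k \<ge> 1 \<Longrightarrow> \<omega> \<in> space M \<Longrightarrow> s j k \<omega> \<in> S j"
    and s_indep: "prob_space.indep_vars M (\<lambda>_. count_space UNIV) (\<lambda>(j, k). s j k)
                    ({1..N} \<times> {1..})"
    and s_distr: "\<And>j k w. j \<in> {1..N} \<Longrightarrow> k \<ge> 1 \<Longrightarrow> w \<in> S j \<Longrightarrow>
                    measure M {\<omega> \<in> space M. s j k \<omega> = w} = lik j w \<theta>s"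
    and A_nonneg: "\<And>t \<omega> i' j. t \<ge> 1 \<Longrightarrow> \<omega> \<in> space M \<Longrightarrow> i' \<in> {1..N} \<Longrightarrow> j \<in> {1..N}
                    \<Longrightarrow> A t \<omega> i' j \<ge> 0"
    and A_stoch: "\<And>t \<omega> i'. t \<ge> 1 \<Longrightarrow> \<omega> \<in> space M \<Longrightarrow> i' \<in> {1..N}
                    \<Longrightarrow> (\<Sum>j\<in>{1..N}. A t \<omega> i' j) = 1"
    and \<beta>: "0 < \<beta>" "\<beta> \<le> 1"
    and \<nu>: "\<nu> \<ge> 1"
    and \<pi>_nonneg: "\<And>r \<omega> j. r \<ge> 1 \<Longrightarrow> \<omega> \<in> space M \<Longrightarrow> j \<in> {1..N} \<Longrightarrow> \<pi> r \<omega> j \<ge> 0"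
    and \<pi>_stoch: "\<And>r \<omega>. r \<ge> 1 \<Longrightarrow> \<omega> \<in> space M \<Longrightarrow> (\<Sum>j\<in>{1..N}. \<pi> r \<omega> j) = 1"
    and \<pi>_lim: "\<And>r \<omega> i' j. r \<ge> 1 \<Longrightarrow> \<omega> \<in> space M \<Longrightarrow> i' \<in> {1..N} \<Longrightarrow> j \<in> {1..N} \<Longrightarrow>
                    (\<lambda>t. Phi N (\<lambda>t'. A t' \<omega>) t r i' j) \<longlonglongrightarrow> \<pi> r \<omega> j"
    and \<pi>_rate: "\<And>t r \<omega> i' j. 1 \<le> r \<Longrightarrow> r \<le> t \<Longrightarrow> \<omega> \<in> space M \<Longrightarrow> i' \<in> {1..N} \<Longrightarrow> j \<in> {1..N} \<Longrightarrow>
                    \<bar>Phi N (\<lambda>t'. A t' \<omega>) t r i' j - \<pi> r \<omega> j\<bar>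
                      \<le> (1 - \<beta> ^ \<nu>) ^ nat \<lceil>real (t - r + 1) / real \<nu>\<rceil>"
    and i: "i \<in> {1..N}"
    and \<theta>: "\<theta> \<noteq> \<theta>s"
  shows "AE \<omega> in M.
           (\<lambda>t. (1 / (real t)\<^sup>2) *
              (\<Sum>r = 1..t.
                 (\<Sum>j = 1..N. Phi N (\<lambda>t'. A t' \<omega>) t (r + 1) i j *
                                 (\<Sum>k = 1..r. LLR lik s j k \<theta> \<theta>s \<omega>))
                 - real r * (\<Sum>j = 1..N. \<pi> (r + 1) \<omega> j * Hdiv S lik j \<theta> \<theta>s)))
           \<longlonglongrightarrow> 0"
  \<comment> \<open>Of the hypotheses on the consensus dynamics only \<open>\<pi>_rate\<close> and the stochasticity of \<open>\<pi>\<close>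
    enter.\<close>
proof -
  interpret prob_space M by (rule M)
  obtain C where "C \<ge> 0" and LLR_le:
    "\<And>j k \<omega>. j \<in> {1..N} \<Longrightarrow> k \<ge> 1 \<Longrightarrow> \<omega> \<in> space M \<Longrightarrow> \<bar>LLR lik s j k \<theta> \<theta>s \<omega>\<bar> \<le> C"
    by (rule LLR_bounded[where J = "{1..N}" and S = S and s = s and \<Omega> = "space M"]) (use S_fin s_range in auto)
  have "AE \<omega> in M. \<forall>j\<in>{1..N}. \<forall>\<epsilon>>0. eventually (\<lambda>r.
      \<bar>(\<Sum>k=1..r. LLR lik s j k \<theta> \<theta>s \<omega>) - real r * Hdiv S lik j \<theta> \<theta>s\<bar> \<le> \<epsilon> * real r) sequentially"
    by (rule LLR_strong_law[where J = "{1..N}" and S = S and s = s and lik = lik and \<theta>s = \<theta>s and \<theta> = \<theta>,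
          OF finite_atLeastAtMost _ s_range s_indep s_distr]) (use S_fin in blast)
  then show ?thesis using AE_space
  proof eventually_elim
    case (elim \<omega>)
    define q where "q = 1 - \<beta> ^ \<nu>"
    have q: "0 \<le> q" "q < 1" unfolding q_def using \<beta> by (auto intro: power_le_one)
    have \<pi>_le_1: "\<pi> r \<omega> j \<le> 1" if "r \<ge> 1" "j \<in> {1..N}" for r j
      using member_le_sum[of j "{1..N}" "\<pi> r \<omega>"] \<pi>_nonneg \<pi>_stoch that elim by auto
    show ?case
    proof (rule consensus_deviation_tendsto_0[where C = C and \<rho> = "root \<nu> q"])
      show "\<bar>Phi N (\<lambda>t'. A t' \<omega>) t (r + 1) i j - \<pi> (r + 1) \<omega> j\<bar> \<le> root \<nu> q ^ (t - r)"
        if "1 \<le> r" "r < t" "j \<in> {1..N}" for t r j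
        using \<pi>_rate[of "r + 1" t \<omega> i j] power_ceiling_div_le_root_power[of q \<nu> "t - r"] q \<nu> that elim i
        unfolding q_def by (simp add: Suc_diff_Suc)
      show "\<bar>Phi N (\<lambda>t'. A t' \<omega>) t (t + 1) i j - \<pi> (t + 1) \<omega> j\<bar> \<le> 1" if "j \<in> {1..N}" for t j
        using \<pi>_le_1[of "t + 1" j] \<pi>_nonneg[of "t + 1" \<omega> j] that elim
        unfolding Phi_Suc_self by (auto simp: ident_mat_def)
      show "0 \<le> root \<nu> q" "root \<nu> q < 1" using q \<nu> by auto
      show "\<bar>\<pi> r \<omega> j\<bar> \<le> 1" if "j \<in> {1..N}" "1 \<le> r" for r j
        using \<pi>_le_1[OF that(2,1)] \<pi>_nonneg[OF that(2) elim(2) that(1)] by simp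
    qed (use \<open>C \<ge> 0\<close> LLR_le elim in auto)
  qed
qed

end
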